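(* Let $X$ be a real Banach space, $f\in\Gamma_0(X)$, $S_f\ne\emptyset$, and $0<\varepsilon<|\partial f|_{\rm bd}$. Then for every $g\in\mathrm{Ptb}(f,\varepsilon)$ and every $u\in X$ with $g(u)>0$, every $x^*\in\partial g(u)$ satisfies $\|x^*\|\ge|\partial f|_{\rm bd}-\varepsilon$; consequently $\mathrm{Er}\{\mathrm{Ptb}(f,\varepsilon)\}\ge|\partial f|_{\rm bd}-\varepsilon>0$.
   Context: $\Gamma_0(X)$: proper convex lsc extended-real-valued functions on $X$. For convex $f$, $\partial f(x):=\{x^*\in X^*\mid \langle x^*,u-x\rangle\le f(u)-f(x)\ \forall u\in X\}$. $d(x,S)=\inf_{u\in S}\|u-x\|$, $d(x,\emptyset)=+\infty$, $\inf\emptyset=+\infty$. $S_f:=\{x\mid f(x)\le0\}$, $S_f^=:=\{x\mid f(x)=0\}$. $\mathrm{Er}\,g:=\inf_{g(x)>0}\frac{g(x)}{d(x,S_g)}$. $|\partial f|_{\rm bd}:=\inf_{f(x)=0} d(0,\mathrm{bd}\,\partial f(x))$. For $x\in S_f^=$, $\varepsilon,\delta\ge0$: $\tau(f,x,\varepsilon,\delta):=\inf_{u:\,f(u)\ge-\varepsilon\|u-x\|-\delta} d(0,\partial f(u))$ if $0\notin\mathrm{int}\,\partial f(x)$, and $:=d(0,\mathrm{bd}\,\partial f(x))$ if $0\in\mathrm{int}\,\partial f(x)$. $g\in\mathrm{Ptb}(f,\varepsilon)$ means: $S_g\ne\emptyset$, $g=f+p$ with $p:X\to\mathbb{R}$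 convex, and there exist $x\in S_f^=$ and $\xi\ge0$ with $\xi+|\partial f|_{\rm bd}-\tau(f,x,\xi,|p(x)|)\le\varepsilon$ and $|p(u)-p(x)|\le\xi\|u-x\|$ for all $u\in X$. $\mathrm{Er}\{\mathrm{Ptb}(f,\varepsilon)\}:=\inf_{g\in\mathrm{Ptb}(f,\varepsilon)}\mathrm{Er}\,g$. *)

theory Defs
  imports "HOL-Analysis.Analysis"
begin

text \<open>Extended-real-valued functions on a real Banach space 'a; the dual space
  X* is rendered as the space of bounded linear functionals 'a =>L real with its operator norm.\<close>

definition proper_fun :: "('a \<Rightarrow> ereal) \<Rightarrow> bool" where
  "proper_fun f \<longleftrightarrow> (\<forall>x. f x \<noteq> -\<infinity>) \<and> (\<exists>x. f x \<noteq> \<infinity>)"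

definition convex_efun :: "('a::real_vector \<Rightarrow> ereal) \<Rightarrow> bool" where
  "convex_efun f \<longleftrightarrow> convex {(x, r::real). f x \<le> ereal r}"

definition lsc_fun :: "('a::topological_space \<Rightarrow> ereal) \<Rightarrow> bool" where
  "lsc_fun f \<longleftrightarrow> (\<forall>c::real. closed {x. f x \<le> ereal c})"

definition Gamma0 :: "('a::real_normed_vector \<Rightarrow> ereal) set" where
  "Gamma0 = {f. proper_fun f \<and> convex_efun f \<and> lsc_fun f}"

definition subdiff :: "('a::real_normed_vector \<Rightarrow> ereal) \<Rightarrow> 'a \<Rightarrow> ('a \<Rightarrow>\<^sub>L real) set" where
  "subdiff f x = {x'. f x \<noteq> \<infinity> \<and> (\<forall>u. f x + ereal (blinfun_apply x' (u - x)) \<le> f u)}"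

definition dset :: "'b::metric_space \<Rightarrow> 'b set \<Rightarrow> ereal" where
  "dset x S = (if S = {} then \<infinity> else ereal (infdist x S))"

definition Sset :: "('a \<Rightarrow> ereal) \<Rightarrow> 'a set" where
  "Sset f = {x. f x \<le> 0}"

definition Seq :: "('a \<Rightarrow> ereal) \<Rightarrow> 'a set" where
  "Seq f = {x. f x = 0}"

text \<open>Error bound modulus Er g (Inf of the empty set is +infinity in ereal).\<close>
definition Er :: "('a::real_normed_vector \<Rightarrow> ereal) \<Rightarrow> ereal" where
  "Er g = Inf {g x / dset x (Sset g) | x. g x > 0}"

definition bd_modulus :: "('a::real_normed_vector \<Rightarrow> ereal) \<Rightarrow> ereal" where
  "bd_modulus f = Inf {dset 0 (frontier (subdiff f x)) | x. f x = 0}"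

definition tau :: "('a::real_normed_vector \<Rightarrow> ereal) \<Rightarrow> 'a \<Rightarrow> real \<Rightarrow> real \<Rightarrow> ereal" where
  "tau f x \<epsilon> \<delta> =
     (if 0 \<in> interior (subdiff f x) then dset 0 (frontier (subdiff f x))
      else Inf {dset 0 (subdiff f u) | u. f u \<ge> ereal (- \<epsilon> * norm (u - x) - \<delta>)})"

definition Ptb :: "('a::real_normed_vector \<Rightarrow> ereal) \<Rightarrow> real \<Rightarrow> ('a \<Rightarrow> ereal) set" where
  "Ptb f \<epsilon> = {g. Sset g \<noteq> {} \<and>
     (\<exists>p::'a \<Rightarrow> real. convex_on UNIV p \<and> g = (\<lambda>u. f u + ereal (p u)) \<and>
        (\<exists>x \<xi>. x \<in> Seq f \<and> \<xi> \<ge> 0 \<and>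
           ereal \<xi> + bd_modulus f - tau f x \<xi> \<bar>p x\<bar> \<le> ereal \<epsilon> \<and>
           (\<forall>u. \<bar>p u - p x\<bar> \<le> \<xi> * norm (u - x))))}"

definition Er_Ptb :: "('a::real_normed_vector \<Rightarrow> ereal) \<Rightarrow> real \<Rightarrow> ereal" where
  "Er_Ptb f \<epsilon> = Inf (Er ` Ptb f \<epsilon>)"

end

theory Submission
  imports Defs
begin

text \<open>Write g = f + p with p convex and \<xi>-Lipschitz, and let x' be a subgradient of g at a point u
  with g u > 0. If 0 is interior to the subdifferential of f at the zero x, the ball of radius
  \<tau> = d(0, bd \<partial>f(x)) inside it gives f w \<ge> s \<parallel>w - x\<parallel> for every s < \<tau>; comparing with the
  subgradient inequality at x (or, when u = x, with a point of S_g) yields \<tau> \<le> \<parallel>x'\<parallel> + \<xi>.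
  Otherwise a Hahn--Banach sandwich turns x' into a subgradient of f at u within distance \<xi>, and u
  is one of the points over which \<tau> is an infimum, so again \<tau> \<le> \<parallel>x'\<parallel> + \<xi>. The defining
  inequality of Ptb(f, \<epsilon>) converts this into \<parallel>x'\<parallel> \<ge> |\<partial>f|_bd - \<epsilon>.

  The error bound is the classical slope argument: if g v < c d(v, S_g) with c below all these
  subgradient norms, Ekeland's principle applied to max g 0 at v produces a point outside S_g at
  which g has a subgradient of norm less than c.\<close>

section \<open>Hahn--Banach\<close>

definition linear_graph :: "('a::real_vector \<times> real) set \<Rightarrow> bool" where
  "linear_graph G \<longleftrightarrow>
     (\<forall>x y x' y'. (x, y) \<in> G \<longrightarrow> (x', y') \<in> G \<longrightarrow> (x + x', y + y') \<in> G) \<and>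
     (\<forall>x y c. (x, y) \<in> G \<longrightarrow> (c *\<^sub>R x, c * y) \<in> G) \<and>
     (\<forall>x y y'. (x, y) \<in> G \<longrightarrow> (x, y') \<in> G \<longrightarrow> y = y')"

lemma linear_graphD:
  assumes "linear_graph G"
  shows linear_graph_add: "(x, y) \<in> G \<Longrightarrow> (x', y') \<in> G \<Longrightarrow> (x + x', y + y') \<in> G"
    and linear_graph_scaleR: "(x, y) \<in> G \<Longrightarrow> (c *\<^sub>R x, c * y) \<in> G"
    and linear_graph_unique: "(x, y) \<in> G \<Longrightarrow> (x, y') \<in> G \<Longrightarrow> y = y'"
  using assms unfolding linear_graph_def by blast+

lemma linear_graph_adjoin_coefficient_unique:
  assumes G: "linear_graph G" and x0: "x0 \<notin> fst ` G"
    and xy: "(x, y) \<in> G" "(x', y') \<in> G" and eq: "x + t *\<^sub>R x0 = x' + t' *\<^sub>R x0"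
  shows "t = t'"
proof (rule ccontr)
  assume "t \<noteq> t'"
  have "(x' + (-1) *\<^sub>R x, y' + (-1) * y) \<in> G"
    using linear_graph_add[OF G xy(2) linear_graph_scaleR[OF G xy(1)]] .
  then have "(x' - x, y' - y) \<in> G"
    by simp
  then have "((1 / (t - t')) *\<^sub>R (x' - x), (1 / (t - t')) * (y' - y)) \<in> G"
    by (rule linear_graph_scaleR[OF G])
  moreover have "x' - x = (t - t') *\<^sub>R x0"
    using eq by (simp add: algebra_simps)
  then have "(1 / (t - t')) *\<^sub>R (x' - x) = x0"
    using \<open>t \<noteq> t'\<close> by simp
  ultimately show False
    using x0 by force
qed

lemma linear_graph_adjoin:
  assumes G: "linear_graph G" and x0: "x0 \<notin> fst ` G"
  shows "linear_graph {(x + t *\<^sub>R x0, y + t * c) | x y t. (x, y) \<in> G}"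
proof -
  let ?G' = "{(x + t *\<^sub>R x0, y + t * c) | x y t. (x, y) \<in> G}"
  have mem: "(x + t *\<^sub>R x0, y + t * c) \<in> ?G'" if "(x, y) \<in> G" for x y t
    using that by blast
  show ?thesis
    unfolding linear_graph_def
  proof (intro conjI allI impI)
    fix a b a' b' assume "(a, b) \<in> ?G'" "(a', b') \<in> ?G'"
    then obtain x y t x' y' t' where "a = x + t *\<^sub>R x0" "b = y + t * c" "(x, y) \<in> G"
      and "a' = x' + t' *\<^sub>R x0" "b' = y' + t' * c" "(x', y') \<in> G"
      by blast
    then show "(a + a', b + b') \<in> ?G'"
      using mem[OF linear_graph_add[OF G], of x y x' y' "t + t'"]
      by (simp add: algebra_simps)
  next
    fix a b r assume "(a, b) \<in> ?G'"
    then obtain x y t where "a = x + t *\<^sub>R x0" "b = y + t * c" "(x, y) \<in> G"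
      by blast
    then show "(r *\<^sub>R a, r * b) \<in> ?G'"
      using mem[OF linear_graph_scaleR[OF G], of x y r "r * t"]
      by (simp add: algebra_simps)
  next
    fix a b b' assume "(a, b) \<in> ?G'" "(a, b') \<in> ?G'"
    then obtain x y t x' y' t' where h: "a = x + t *\<^sub>R x0" "b = y + t * c" "(x, y) \<in> G"
      and h': "a = x' + t' *\<^sub>R x0" "b' = y' + t' * c" "(x', y') \<in> G"
      by blast
    then have "t = t'"
      using linear_graph_adjoin_coefficient_unique[OF G x0] by metis
    with h h' show "b = b'"
      using linear_graph_unique[OF G] by auto
  qed
qed

lemma linear_graph_adjoin_dominated:
  fixes q :: "'a::real_vector \<Rightarrow> real"
  assumes hom: "\<And>t x. t > 0 \<Longrightarrow> q (t *\<^sub>R x) = t * q x"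
    and G: "linear_graph G" and dom: "\<And>x y. (x, y) \<in> G \<Longrightarrow> y \<le> q x"
    and lower: "\<And>x y. (x, y) \<in> G \<Longrightarrow> y - q (x - x0) \<le> c"
    and upper: "\<And>x y. (x, y) \<in> G \<Longrightarrow> c \<le> q (x + x0) - y"
    and xy: "(x, y) \<in> G"
  shows "y + t * c \<le> q (x + t *\<^sub>R x0)"
proof -
  consider "t = 0" | "t > 0" | "t < 0"
    by linarith
  then show ?thesis
  proof cases
    case 1
    then show ?thesis using dom[OF xy] by simp
  next
    case 2
    have "c \<le> q ((1 / t) *\<^sub>R x + x0) - (1 / t) * y"
      using upper[OF linear_graph_scaleR[OF G xy]] .
    then have "t * c \<le> t * q ((1 / t) *\<^sub>R x + x0) - y"
      using 2 by (simp add: field_simps)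
    also have "t * q ((1 / t) *\<^sub>R x + x0) = q (x + t *\<^sub>R x0)"
      using hom[OF 2, of "(1 / t) *\<^sub>R x + x0"] 2 by (simp add: scaleR_add_right)
    finally show ?thesis by simp
  next
    case 3
    then have s: "- t > 0" by simp
    have "(1 / - t) * y - q ((1 / - t) *\<^sub>R x - x0) \<le> c"
      using lower[OF linear_graph_scaleR[OF G xy]] .
    then have "y + t * c \<le> - t * q ((1 / - t) *\<^sub>R x - x0)"
      using s by (simp add: field_simps)
    also have "- t * q ((1 / - t) *\<^sub>R x - x0) = q (x + t *\<^sub>R x0)"
      using hom[OF s, of "(1 / - t) *\<^sub>R x - x0"] s by (simp add: scaleR_diff_right)
    finally show ?thesis .
  qed
qed

text \<open>The one-step extension of Hahn--Banach: the new value c at x0 must lie between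
  y - q (x - x0) and q (x + x0) - y for all (x, y) in the graph, which subadditivity makes possible.\<close>

lemma linear_graph_adjoin_value:
  fixes q :: "'a::real_vector \<Rightarrow> real"
  assumes subadd: "\<And>x y. q (x + y) \<le> q x + q y"
    and G: "linear_graph G" and dom: "\<And>x y. (x, y) \<in> G \<Longrightarrow> y \<le> q x" and ne: "G \<noteq> {}"
  obtains c where "\<And>x y. (x, y) \<in> G \<Longrightarrow> y - q (x - x0) \<le> c"
    "\<And>x y. (x, y) \<in> G \<Longrightarrow> c \<le> q (x + x0) - y"
proof -
  define A where "A = {y - q (x - x0) | x y. (x, y) \<in> G}"
  have A_le: "a \<le> q (x + x0) - y" if "a \<in> A" "(x, y) \<in> G" for a x y
  proof -
    obtain x1 y1 where a: "a = y1 - q (x1 - x0)" "(x1, y1) \<in> G"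
      using \<open>a \<in> A\<close> A_def by blast
    have "y1 + y \<le> q (x1 + x)"
      using dom linear_graph_add[OF G a(2) that(2)] by blast
    also have "\<dots> \<le> q (x1 - x0) + q (x + x0)"
      using subadd[of "x1 - x0" "x + x0"] by simp
    finally show ?thesis using a by simp
  qed
  obtain x1 y1 where "(x1, y1) \<in> G"
    using ne by auto
  then have "A \<noteq> {}" "bdd_above A"
    using A_le unfolding A_def by (blast, meson bdd_above.I)
  then show ?thesis
    using that[of "Sup A"] A_le unfolding A_def by (blast intro: cSup_upper cSup_least)
qed

lemma linear_graph_extend:
  fixes q :: "'a::real_vector \<Rightarrow> real"
  assumes subadd: "\<And>x y. q (x + y) \<le> q x + q y"
    and hom: "\<And>t x. t > 0 \<Longrightarrow> q (t *\<^sub>R x) = t * q x"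
    and G: "linear_graph G" and dom: "\<And>x y. (x, y) \<in> G \<Longrightarrow> y \<le> q x"
    and ne: "G \<noteq> {}" and x0: "x0 \<notin> fst ` G"
  shows "\<exists>G'. linear_graph G' \<and> (\<forall>x y. (x, y) \<in> G' \<longrightarrow> y \<le> q x) \<and> G \<subset> G'"
proof -
  obtain c where lower: "\<And>x y. (x, y) \<in> G \<Longrightarrow> y - q (x - x0) \<le> c"
    and upper: "\<And>x y. (x, y) \<in> G \<Longrightarrow> c \<le> q (x + x0) - y"
    using linear_graph_adjoin_value[OF subadd G dom ne] by blast
  define G' where "G' = {(x + t *\<^sub>R x0, y + t * c) | x y t. (x, y) \<in> G}"
  obtain x1 y1 where "(x1, y1) \<in> G"
    using ne by auto
  then have "(0, 0) \<in> G"
    using linear_graph_scaleR[OF G, of x1 y1 0] by simp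
  then have "(x0, c) \<in> G'"
    unfolding G'_def by (intro CollectI exI[of _ 0] exI[of _ "0::real"] exI[of _ 1]) simp
  moreover have "G \<subseteq> G'"
    unfolding G'_def by force
  moreover have "\<forall>x y. (x, y) \<in> G' \<longrightarrow> y \<le> q x"
  proof (intro allI impI)
    fix x y assume "(x, y) \<in> G'"
    then obtain x' y' t where "x = x' + t *\<^sub>R x0" "y = y' + t * c" "(x', y') \<in> G"
      unfolding G'_def by blast
    then show "y \<le> q x"
      using linear_graph_adjoin_dominated[OF hom G dom lower upper] by simp
  qed
  moreover have "linear_graph G'"
    unfolding G'_def by (rule linear_graph_adjoin[OF G x0])
  moreover have "G' \<noteq> G"
    using \<open>(x0, c) \<in> G'\<close> x0 by force
  ultimately show ?thesis
    by blast
qed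

lemma linear_graph_Union_chain:
  assumes "\<And>G. G \<in> \<C> \<Longrightarrow> linear_graph G" and "subset.chain UNIV \<C>"
  shows "linear_graph (\<Union>\<C>)"
proof -
  have common: "\<exists>G\<in>\<C>. (x, y) \<in> G \<and> (x', y') \<in> G"
    if xy: "(x, y) \<in> \<Union>\<C>" "(x', y') \<in> \<Union>\<C>" for x y x' y'
  proof -
    obtain X Y where "X \<in> \<C>" "Y \<in> \<C>" "(x, y) \<in> X" "(x', y') \<in> Y"
      using xy by blast
    moreover have "X \<subseteq> Y \<or> Y \<subseteq> X"
      using assms(2) calculation unfolding subset.chain_def by blast
    ultimately show ?thesis
      by blast
  qed
  show ?thesis
    unfolding linear_graph_def
  proof (intro conjI allI impI)
    fix x y x' y' assume "(x, y) \<in> \<Union>\<C>" "(x', y') \<in> \<Union>\<C>"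
    then obtain G where "G \<in> \<C>" "(x, y) \<in> G" "(x', y') \<in> G"
      using common by blast
    then show "(x + x', y + y') \<in> \<Union>\<C>"
      using linear_graph_add[OF assms(1)] by blast
  next
    fix x y c assume "(x, y) \<in> \<Union>\<C>"
    then show "(c *\<^sub>R x, c * y) \<in> \<Union>\<C>"
      using linear_graph_scaleR[OF assms(1)] by blast
  next
    fix x y y' assume "(x, y) \<in> \<Union>\<C>" "(x, y') \<in> \<Union>\<C>"
    then obtain G where "G \<in> \<C>" "(x, y) \<in> G" "(x, y') \<in> G"
      using common by blast
    then show "y = y'"
      using linear_graph_unique[OF assms(1)] by blast
  qed
qed

lemma linear_graph_total_obtains_linear:
  assumes G: "linear_graph G" and total: "\<And>x. x \<in> fst ` G"
  obtains l where "linear l" "\<And>x. (x, l x) \<in> G"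
proof -
  define l where "l x = (THE y. (x, y) \<in> G)" for x
  have l_eq: "l x = y" if "(x, y) \<in> G" for x y
    unfolding l_def
  proof (rule the_equality)
    show "(x, y) \<in> G"
      by (fact that)
    show "y' = y" if "(x, y') \<in> G" for y'
      using linear_graph_unique[OF G \<open>(x, y) \<in> G\<close> that] by simp
  qed
  have l_mem: "(x, l x) \<in> G" for x
  proof -
    obtain y where "(x, y) \<in> G"
      using total[of x] by force
    then show ?thesis
      using l_eq by simp
  qed
  have "linear l"
    unfolding linear_iff
    using l_eq[OF linear_graph_add[OF G l_mem l_mem]] l_eq[OF linear_graph_scaleR[OF G l_mem]]
    by auto
  then show ?thesis
    using that l_mem by blast
qed

lemma hahn_banach:
  fixes q :: "'a::real_vector \<Rightarrow> real"
  assumes subadd: "\<And>x y. q (x + y) \<le> q x + q y"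
    and hom: "\<And>t x. t > 0 \<Longrightarrow> q (t *\<^sub>R x) = t * q x"
    and G0: "linear_graph G0" and dom: "\<And>x y. (x, y) \<in> G0 \<Longrightarrow> y \<le> q x"
    and ne: "G0 \<noteq> {}"
  obtains l where "linear l" "\<And>x. l x \<le> q x" "\<And>x y. (x, y) \<in> G0 \<Longrightarrow> l x = y"
proof -
  define \<A> where "\<A> = {G. G0 \<subseteq> G \<and> linear_graph G \<and> (\<forall>x y. (x, y) \<in> G \<longrightarrow> y \<le> q x)}"
  have "\<Union>\<C> \<in> \<A>" if "\<C> \<noteq> {}" "subset.chain \<A> \<C>" for \<C>
  proof -
    have "subset.chain UNIV \<C>" "\<C> \<subseteq> \<A>"
      using that(2) unfolding subset.chain_def by auto
    then show ?thesis
      using that(1) linear_graph_Union_chain[of \<C>] unfolding \<A>_def by blast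
  qed
  moreover have "\<A> \<noteq> {}"
    using G0 dom unfolding \<A>_def by blast
  ultimately obtain G where G: "G \<in> \<A>" and maximal: "\<And>X. X \<in> \<A> \<Longrightarrow> G \<subseteq> X \<Longrightarrow> X = G"
    using subset_Zorn_nonempty[of \<A>] by blast
  have lin: "linear_graph G" and G_dom: "\<And>x y. (x, y) \<in> G \<Longrightarrow> y \<le> q x" and "G0 \<subseteq> G"
    using G unfolding \<A>_def by auto
  have "x \<in> fst ` G" for x
  proof (rule ccontr)
    assume "x \<notin> fst ` G"
    moreover have "G \<noteq> {}"
      using ne \<open>G0 \<subseteq> G\<close> by blast
    ultimately obtain G' where "linear_graph G'" "\<forall>x y. (x, y) \<in> G' \<longrightarrow> y \<le> q x" "G \<subset> G'"
      using linear_graph_extend[OF subadd hom lin G_dom] by blast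
    moreover from this have "G' \<in> \<A>"
      using \<open>G0 \<subseteq> G\<close> unfolding \<A>_def by blast
    ultimately show False
      using maximal[of G'] by blast
  qed
  then obtain l where "linear l" "\<And>x. (x, l x) \<in> G"
    using linear_graph_total_obtains_linear[OF lin] by blast
  then show ?thesis
    using that G_dom linear_graph_unique[OF lin] \<open>G0 \<subseteq> G\<close> by blast
qed

lemma linear_graph_norm_line: "linear_graph (range (\<lambda>t. (t *\<^sub>R h, t * norm h)))"
  unfolding linear_graph_def
proof (intro conjI allI impI)
  fix x y x' y' assume "(x, y) \<in> range (\<lambda>t. (t *\<^sub>R h, t * norm h))"
    "(x', y') \<in> range (\<lambda>t. (t *\<^sub>R h, t * norm h))"
  then obtain t t' where "(x, y) = (t *\<^sub>R h, t * norm h)" "(x', y') = (t' *\<^sub>R h, t' * norm h)"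
    by blast
  then have "(x + x', y + y') = ((t + t') *\<^sub>R h, (t + t') * norm h)"
    by (simp add: algebra_simps)
  then show "(x + x', y + y') \<in> range (\<lambda>t. (t *\<^sub>R h, t * norm h))"
    by blast
next
  fix x y c assume "(x, y) \<in> range (\<lambda>t. (t *\<^sub>R h, t * norm h))"
  then obtain t where "(x, y) = (t *\<^sub>R h, t * norm h)"
    by blast
  then have "(c *\<^sub>R x, c * y) = ((c * t) *\<^sub>R h, (c * t) * norm h)"
    by simp
  then show "(c *\<^sub>R x, c * y) \<in> range (\<lambda>t. (t *\<^sub>R h, t * norm h))"
    by blast
next
  fix x y y' assume "(x, y) \<in> range (\<lambda>t. (t *\<^sub>R h, t * norm h))"
    "(x, y') \<in> range (\<lambda>t. (t *\<^sub>R h, t * norm h))"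
  then obtain t t' where "x = t *\<^sub>R h" "y = t * norm h" "x = t' *\<^sub>R h" "y' = t' * norm h"
    by blast
  then have "t = t' \<or> h = 0"
    using scaleR_cancel_right by metis
  then show "y = y'"
    using \<open>y = t * norm h\<close> \<open>y' = t' * norm h\<close> by auto
qed

lemma exists_norming_functional:
  fixes h :: "'a::real_normed_vector"
  obtains l :: "'a \<Rightarrow>\<^sub>L real" where "l h = norm h" "norm l \<le> 1"
proof -
  define G0 where "G0 = range (\<lambda>t. (t *\<^sub>R h, t * norm h))"
  have dom: "y \<le> norm x" if "(x, y) \<in> G0" for x y
    using that unfolding G0_def by (auto intro!: mult_right_mono)
  have hom: "norm (t *\<^sub>R x) = t * norm x" if "t > 0" for t and x :: 'a
    using that by simp
  have "G0 \<noteq> {}"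
    unfolding G0_def by blast
  then obtain l where l: "linear l" "\<And>x. l x \<le> norm x" "\<And>x y. (x, y) \<in> G0 \<Longrightarrow> l x = y"
    using hahn_banach[OF norm_triangle_ineq hom _ dom] linear_graph_norm_line unfolding G0_def by blast
  have "(h, norm h) \<in> G0"
    unfolding G0_def by (rule range_eqI[of _ _ 1]) simp
  then have "l h = norm h"
    by (rule l(3))
  moreover have abs_le: "\<bar>l x\<bar> \<le> norm x" for x
    using l(2)[of x] l(2)[of "- x"] linear_neg[OF l(1), of x] by simp
  then have "bounded_linear l"
    using l(1) by (intro bounded_linear_intro[where K = 1]) (auto simp: linear_iff)
  ultimately show ?thesis
    using that[of "Blinfun l"] abs_le
    by (simp add: bounded_linear_Blinfun_apply norm_blinfun_bound)
qed

section \<open>Convex extended-real functions\<close>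

lemma convex_efunD:
  assumes "convex_efun f" "f a = ereal ra" "f b = ereal rb" "0 \<le> t" "t \<le> 1"
  shows "f (t *\<^sub>R a + (1 - t) *\<^sub>R b) \<le> ereal (t * ra + (1 - t) * rb)"
proof -
  have "(a, ra) \<in> {(x, r). f x \<le> ereal r}" "(b, rb) \<in> {(x, r). f x \<le> ereal r}"
    using assms(2,3) by simp_all
  then have "t *\<^sub>R (a, ra) + (1 - t) *\<^sub>R (b, rb) \<in> {(x, r). f x \<le> ereal r}"
    using assms(1,4,5) unfolding convex_efun_def by (intro convexD) auto
  then show ?thesis
    by simp
qed

lemma convex_efunI:
  assumes proper: "\<And>x. f x \<noteq> -\<infinity>"
    and conv: "\<And>a b ra rb t. f a = ereal ra \<Longrightarrow> f b = ereal rb \<Longrightarrow> 0 \<le> t \<Longrightarrow> t \<le> 1 \<Longrightarrow>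
      f (t *\<^sub>R a + (1 - t) *\<^sub>R b) \<le> ereal (t * ra + (1 - t) * rb)"
  shows "convex_efun f"
  unfolding convex_efun_def
proof (rule convexI, clarsimp)
  fix a b :: 'a and r s u v :: real
  assume "f a \<le> ereal r" "f b \<le> ereal s" "0 \<le> u" "0 \<le> v" "u + v = 1"
  moreover obtain ra rb where "f a = ereal ra" "f b = ereal rb"
    using calculation(1,2) proper[of a] proper[of b] by (cases "f a"; cases "f b") auto
  moreover have "v = 1 - u"
    using \<open>u + v = 1\<close> by simp
  ultimately have "f (u *\<^sub>R a + v *\<^sub>R b) \<le> ereal (u * ra + v * rb)"
    "u * ra + v * rb \<le> u * r + v * s"
    using conv[of a ra b rb u] by (simp_all add: add_mono mult_left_mono)
  then show "f (u *\<^sub>R a + v *\<^sub>R b) \<le> ereal (u * r + v * s)"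
    by (meson ereal_less_eq(3) order_trans)
qed

lemma convex_efun_add_convex_on:
  assumes f: "convex_efun f" "\<And>x. f x \<noteq> -\<infinity>" and p: "convex_on UNIV p"
  shows "convex_efun (\<lambda>x. f x + ereal (p x))"
proof (rule convex_efunI)
  show "f x + ereal (p x) \<noteq> -\<infinity>" for x
    using f(2)[of x] by (cases "f x") auto
  fix a b ra rb and t :: real
  assume "f a + ereal (p a) = ereal ra" "f b + ereal (p b) = ereal rb" "0 \<le> t" "t \<le> 1"
  moreover from this have "f a = ereal (ra - p a)" "f b = ereal (rb - p b)"
    using f(2)[of a] f(2)[of b] by (cases "f a"; cases "f b"; simp)+
  ultimately have "f (t *\<^sub>R a + (1 - t) *\<^sub>R b) \<le> ereal (t * (ra - p a) + (1 - t) * (rb - p b))"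
    "p (t *\<^sub>R a + (1 - t) *\<^sub>R b) \<le> t * p a + (1 - t) * p b"
    using convex_efunD[OF f(1)] convex_onD[OF p, of "1 - t" a b] by simp_all
  then show "f (t *\<^sub>R a + (1 - t) *\<^sub>R b) + ereal (p (t *\<^sub>R a + (1 - t) *\<^sub>R b))
      \<le> ereal (t * ra + (1 - t) * rb)"
    by (cases "f (t *\<^sub>R a + (1 - t) *\<^sub>R b)") (auto simp: algebra_simps)
qed

lemma lsc_fun_add_continuous:
  fixes f :: "'a::topological_space \<Rightarrow> ereal"
  assumes f: "lsc_fun f" and \<phi>: "continuous_on UNIV \<phi>"
  shows "lsc_fun (\<lambda>x. f x + ereal (\<phi> x))"
  unfolding lsc_fun_def closed_def
proof (intro allI Topological_Spaces.openI)
  fix c x0 assume "x0 \<in> - {x. f x + ereal (\<phi> x) \<le> ereal c}"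
  then have "ereal (c - \<phi> x0) < f x0"
    by (cases "f x0") auto
  then obtain r where r: "ereal (c - \<phi> x0) < ereal r" "ereal r < f x0"
    using ereal_dense2 by blast
  define U where "U = - {x. f x \<le> ereal r} \<inter> {x. c - r < \<phi> x}"
  have "open U"
    unfolding U_def using f \<phi>
    by (intro open_Int open_Collect_less continuous_on_const) (auto simp: lsc_fun_def closed_def)
  moreover have "x0 \<in> U"
    unfolding U_def using r by auto
  moreover have "U \<subseteq> - {x. f x + ereal (\<phi> x) \<le> ereal c}"
  proof
    fix y assume "y \<in> U"
    then have "ereal r < f y" "c - r < \<phi> y"
      unfolding U_def by auto
    then show "y \<in> - {x. f x + ereal (\<phi> x) \<le> ereal c}"
      by (cases "f y") auto
  qed
  ultimately show "\<exists>T. open T \<and> x0 \<in> T \<and> T \<subseteq> - {x. f x + ereal (\<phi> x) \<le> ereal c}"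
    by blast
qed

lemma convex_on_Lipschitz_of_point:
  fixes p :: "'a::real_normed_vector \<Rightarrow> real"
  assumes p: "convex_on UNIV p" and L: "0 \<le> L"
    and at_x: "\<And>u. \<bar>p u - p x\<bar> \<le> L * norm (u - x)"
  shows "\<bar>p a - p b\<bar> \<le> L * norm (a - b)"
proof -
  have slope: "p (z + h) - p z \<le> L * norm h" for z h
  proof (rule ccontr)
    assume "\<not> p (z + h) - p z \<le> L * norm h"
    then have D: "p (z + h) - p z - L * norm h > 0" (is "?D > 0")
      by simp
    define C where "C = p x - p z + L * norm (z - x)"
    have "C \<ge> 0"
      using at_x[of z] C_def by simp
    define T where "T = C / ?D + 1"
    have T: "T \<ge> 1" "T * ?D = C + ?D"
      using \<open>C \<ge> 0\<close> D unfolding T_def by (simp_all add: field_simps)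
    \<comment> \<open>Convexity makes the slope along h grow; far out, at z + T h, it would beat the bound at x.\<close>
    have "z + h = (1 - 1 / T) *\<^sub>R z + (1 / T) *\<^sub>R (z + T *\<^sub>R h)"
      using T by (simp add: algebra_simps)
    then have "p (z + h) \<le> (1 - 1 / T) * p z + (1 / T) * p (z + T *\<^sub>R h)"
      using convex_onD[OF p, of "1 / T" z "z + T *\<^sub>R h"] T by simp
    then have "T * (p (z + h) - p z) \<le> p (z + T *\<^sub>R h) - p z"
      using T by (simp add: field_simps)
    also have "p (z + T *\<^sub>R h) \<le> p x + L * norm (z - x) + L * (T * norm h)"
    proof -
      have "norm (z + T *\<^sub>R h - x) \<le> norm (z - x) + T * norm h"
        using norm_triangle_ineq[of "z - x" "T *\<^sub>R h"] T by (simp add: algebra_simps)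
      then have "L * norm (z + T *\<^sub>R h - x) \<le> L * norm (z - x) + L * (T * norm h)"
        using mult_left_mono[OF _ L] by (simp add: distrib_left[symmetric])
      then show ?thesis
        using at_x[of "z + T *\<^sub>R h"] by linarith
    qed
    finally have "T * ?D \<le> C"
      unfolding C_def by (simp add: algebra_simps)
    then show False
      using T D by simp
  qed
  show ?thesis
    using slope[of b "a - b"] slope[of a "b - a"] by (simp add: norm_minus_commute abs_le_iff)
qed

section \<open>Ekeland's variational principle\<close>

definition ekeland_set :: "('a::metric_space \<Rightarrow> ereal) \<Rightarrow> real \<Rightarrow> 'a \<Rightarrow> 'a set" where
  "ekeland_set h \<delta> z = {w. h w + ereal (\<delta> * dist w z) \<le> h z}"

lemma ekeland_set_refl: "z \<in> ekeland_set h \<delta> z"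
  unfolding ekeland_set_def by simp

lemma ekeland_set_trans:
  assumes "0 \<le> \<delta>" "w \<in> ekeland_set h \<delta> y" "y \<in> ekeland_set h \<delta> z"
  shows "w \<in> ekeland_set h \<delta> z"
proof -
  have "ereal (\<delta> * dist w z) \<le> ereal (\<delta> * dist w y) + ereal (\<delta> * dist y z)"
    using dist_triangle[of w z y] assms(1) by (simp add: mult_left_mono flip: distrib_left)
  then have "h w + ereal (\<delta> * dist w z) \<le> (h w + ereal (\<delta> * dist w y)) + ereal (\<delta> * dist y z)"
    by (metis add.assoc add_left_mono)
  also have "\<dots> \<le> h y + ereal (\<delta> * dist y z)"
    using assms(2) unfolding ekeland_set_def by (simp add: add_right_mono)
  also have "\<dots> \<le> h z"
    using assms(3) unfolding ekeland_set_def by simp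
  finally show ?thesis
    unfolding ekeland_set_def by simp
qed

lemma ekeland_set_le:
  assumes "0 \<le> \<delta>" "\<And>x. 0 \<le> h x" "w \<in> ekeland_set h \<delta> z"
  shows "h w \<le> h z"
proof -
  have "h w \<le> h w + ereal (\<delta> * dist w z)"
    using assms(1) by (intro add_increasing2) simp_all
  also have "\<dots> \<le> h z"
    using assms(3) unfolding ekeland_set_def by simp
  finally show ?thesis .
qed

lemma closed_ekeland_set:
  assumes "lsc_fun h" "\<And>x. 0 \<le> h x"
  shows "closed (ekeland_set h \<delta> z)"
proof (cases "h z")
  case (real r)
  have "lsc_fun (\<lambda>w. h w + ereal (\<delta> * dist w z))"
    by (intro lsc_fun_add_continuous assms(1) continuous_intros)
  then show ?thesis
    unfolding ekeland_set_def lsc_fun_def real by blast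
qed (use assms(2)[of z] in \<open>simp_all add: ekeland_set_def\<close>)

lemma ekeland_set_shrink:
  assumes \<delta>: "0 \<le> \<delta>" and nonneg: "\<And>x. 0 \<le> h x" and fin: "h z \<noteq> \<infinity>" and "e > 0"
  obtains y where "y \<in> ekeland_set h \<delta> z" "\<And>w. w \<in> ekeland_set h \<delta> y \<Longrightarrow> \<delta> * dist w y < e"
proof -
  define I where "I = Inf (h ` ekeland_set h \<delta> z)"
  have "0 \<le> I"
    unfolding I_def using nonneg by (auto intro: Inf_greatest)
  moreover have "I \<le> h z"
    unfolding I_def by (rule Inf_lower) (rule imageI[OF ekeland_set_refl])
  ultimately obtain i where i: "I = ereal i"
    using fin by (cases I) auto
  then have "Inf (h ` ekeland_set h \<delta> z) < ereal (i + e)"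
    using \<open>e > 0\<close> unfolding I_def by simp
  then obtain y where y: "y \<in> ekeland_set h \<delta> z" "h y < ereal (i + e)"
    by (auto simp: Inf_less_iff)
  have "\<delta> * dist w y < e" if "w \<in> ekeland_set h \<delta> y" for w
  proof -
    have "ereal i \<le> h w"
      using ekeland_set_trans[OF \<delta> that y(1)] unfolding i[symmetric] I_def by (auto intro: Inf_lower)
    moreover have "h w + ereal (\<delta> * dist w y) < ereal (i + e)"
      using that y(2) unfolding ekeland_set_def mem_Collect_eq by (rule order_le_less_trans)
    ultimately show ?thesis
      using nonneg[of w] by (cases "h w") auto
  qed
  then show ?thesis
    using that y(1) by blast
qed

lemma diameter_tendsto_0_of_radius:
  fixes T :: "nat \<Rightarrow> 'a::metric_space set"
  assumes radius: "\<And>n w. w \<in> T n \<Longrightarrow> \<delta> * dist w (c n) < inverse (Suc n)"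
    and "\<delta> > 0" "e > 0"
  shows "\<exists>n. \<forall>x\<in>T n. \<forall>y\<in>T n. dist x y < e"
proof -
  obtain N where N: "inverse (real (Suc N)) < \<delta> * e / 2"
    using reals_Archimedean[of "\<delta> * e / 2"] assms(2,3) by auto
  have "dist x y < e" if "x \<in> T N" "y \<in> T N" for x y
  proof -
    have "\<delta> * dist x y \<le> \<delta> * dist x (c N) + \<delta> * dist y (c N)"
      using dist_triangle2[of x y "c N"] assms(2) by (simp flip: distrib_left)
    also have "\<dots> < \<delta> * e"
      using radius[OF that(1)] radius[OF that(2)] N by linarith
    finally show ?thesis
      using assms(2) by simp
  qed
  then show ?thesis
    by blast
qed

lemma ekeland_variational_principle:
  fixes h :: "'a::{metric_space, complete_space} \<Rightarrow> ereal"
  assumes lsc: "lsc_fun h" and nonneg: "\<And>x. 0 \<le> h x" and fin: "h v \<noteq> \<infinity>" and \<delta>: "\<delta> > 0"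
  obtains z where "h z + ereal (\<delta> * dist z v) \<le> h v" "\<And>w. h z \<le> h w + ereal (\<delta> * dist w z)"
proof -
  let ?S = "ekeland_set h \<delta>"
  have fin_S: "h z \<noteq> \<infinity>" if "z \<in> ?S v" for z
    using ekeland_set_le[OF _ nonneg that] \<delta> fin by auto
  have "\<exists>zs. \<forall>n. zs n \<in> ?S v \<and>
      zs (Suc n) \<in> ?S (zs n) \<and> (\<forall>w\<in>?S (zs (Suc n)). \<delta> * dist w (zs (Suc n)) < inverse (Suc n))"
  proof (rule dependent_nat_choice)
    fix x n assume "x \<in> ?S v"
    have "\<exists>y\<in>?S x. \<forall>w\<in>?S y. \<delta> * dist w y < inverse (Suc n)"
      by (rule ekeland_set_shrink[of \<delta> h x "inverse (Suc n)"])
        (use \<delta> nonneg fin_S[OF \<open>x \<in> ?S v\<close>] in auto)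
    with \<open>x \<in> ?S v\<close> show "\<exists>y. y \<in> ?S v \<and> y \<in> ?S x \<and> (\<forall>w\<in>?S y. \<delta> * dist w y < inverse (Suc n))"
      using ekeland_set_trans[OF less_imp_le[OF \<delta>]] by blast
  qed (use ekeland_set_refl in blast)
  then obtain zs where zs: "\<And>n. zs n \<in> ?S v" "\<And>n. zs (Suc n) \<in> ?S (zs n)"
    and small: "\<And>n w. w \<in> ?S (zs (Suc n)) \<Longrightarrow> \<delta> * dist w (zs (Suc n)) < inverse (Suc n)"
    by blast
  have decreasing: "?S (zs n) \<subseteq> ?S (zs m)" if "m \<le> n" for m n
    by (rule lift_Suc_antimono_le[of "\<lambda>n. ?S (zs n)", OF _ that])
      (use ekeland_set_trans[OF less_imp_le[OF \<delta>] _ zs(2)] in blast)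
  have "\<exists>n. \<forall>x\<in>?S (zs n). \<forall>y\<in>?S (zs n). dist x y < e" if "e > 0" for e
    using diameter_tendsto_0_of_radius[of "\<lambda>n. ?S (zs (Suc n))" \<delta> "\<lambda>n. zs (Suc n)" e] small \<delta> that
    by blast
  then obtain z where z: "\<Inter> (range (\<lambda>n. ?S (zs n))) = {z}"
    using decreasing_closed_nest_sing[of "\<lambda>n. ?S (zs n)", OF closed_ekeland_set[OF lsc nonneg]]
      ekeland_set_refl decreasing by (metis empty_iff)
  have "z \<in> ?S (zs 0)"
    using z by blast
  then have "z \<in> ?S v"
    using ekeland_set_trans[OF less_imp_le[OF \<delta>] _ zs(1)] by blast
  moreover have "h z \<le> h w + ereal (\<delta> * dist w z)" for w
  proof (rule ccontr)
    assume "\<not> ?thesis"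
    then have "w \<in> ?S z"
      unfolding ekeland_set_def by simp
    moreover have z_in: "z \<in> ?S (zs n)" for n
      using z by blast
    ultimately have "w \<in> ?S (zs n)" for n
      using ekeland_set_trans[OF less_imp_le[OF \<delta>] _ z_in] by blast
    then have "w \<in> \<Inter> (range (\<lambda>n. ?S (zs n)))"
      by blast
    with z \<open>\<not> ?thesis\<close> show False
      by simp
  qed
  ultimately show ?thesis
    by (intro that) (simp_all add: ekeland_set_def)
qed

section \<open>Linear minorants\<close>

text \<open>For k 0 = 0 this is the directional derivative of k at 0.\<close>

definition dirderiv0 :: "('a::real_vector \<Rightarrow> real) \<Rightarrow> 'a \<Rightarrow> real" where
  "dirderiv0 k w = Inf ((\<lambda>t. k (t *\<^sub>R w) / t) ` {0<..})"

context
  fixes k :: "'a::real_normed_vector \<Rightarrow> real" and L :: real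
  assumes lower: "\<And>w. - L * norm w \<le> k w"
begin

lemma dirderiv0_quotient_lower: "t > 0 \<Longrightarrow> - L * norm w \<le> k (t *\<^sub>R w) / t"
  using lower[of "t *\<^sub>R w"] by (simp add: field_simps)

lemma dirderiv0_le: "t > 0 \<Longrightarrow> dirderiv0 k w \<le> k (t *\<^sub>R w) / t"
  unfolding dirderiv0_def using dirderiv0_quotient_lower
  by (intro cInf_lower) (auto intro!: bdd_belowI2)

lemma dirderiv0_greatest: "(\<And>t. t > 0 \<Longrightarrow> z \<le> k (t *\<^sub>R w) / t) \<Longrightarrow> z \<le> dirderiv0 k w"
  unfolding dirderiv0_def by (intro cInf_greatest) auto

lemma dirderiv0_lower: "- L * norm w \<le> dirderiv0 k w"
  using dirderiv0_greatest dirderiv0_quotient_lower by blast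

lemma dirderiv0_scaleR:
  assumes s: "s > 0"
  shows "dirderiv0 k (s *\<^sub>R w) = s * dirderiv0 k w"
proof (rule antisym)
  have "dirderiv0 k (s *\<^sub>R w) / s \<le> dirderiv0 k w"
  proof (rule dirderiv0_greatest)
    fix t :: real assume "t > 0"
    then have "dirderiv0 k (s *\<^sub>R w) \<le> k ((t / s) *\<^sub>R (s *\<^sub>R w)) / (t / s)"
      using s by (intro dirderiv0_le) simp
    then show "dirderiv0 k (s *\<^sub>R w) / s \<le> k (t *\<^sub>R w) / t"
      using s by (simp add: field_simps)
  qed
  then show "dirderiv0 k (s *\<^sub>R w) \<le> s * dirderiv0 k w"
    using s by (simp add: field_simps)
next
  show "s * dirderiv0 k w \<le> dirderiv0 k (s *\<^sub>R w)"
  proof (rule dirderiv0_greatest)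
    fix t :: real assume "t > 0"
    then have "dirderiv0 k w \<le> k ((t * s) *\<^sub>R w) / (t * s)"
      using s by (intro dirderiv0_le) simp
    then have "s * dirderiv0 k w \<le> s * (k ((t * s) *\<^sub>R w) / (t * s))"
      using s by (intro mult_left_mono) auto
    also have "\<dots> = k (t *\<^sub>R (s *\<^sub>R w)) / t"
      using s by (simp add: mult.commute)
    finally show "s * dirderiv0 k w \<le> k (t *\<^sub>R (s *\<^sub>R w)) / t" .
  qed
qed

lemma dirderiv0_add:
  assumes convex: "convex_on UNIV k"
  shows "dirderiv0 k (x + y) \<le> dirderiv0 k x + dirderiv0 k y"
proof -
  have key: "dirderiv0 k (x + y) \<le> k (t1 *\<^sub>R x) / t1 + k (t2 *\<^sub>R y) / t2"
    if t1: "t1 > 0" and t2: "t2 > 0" for t1 t2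
  proof -
    define t where "t = t1 * t2 / (t1 + t2)"
    define \<mu> where "\<mu> = t2 / (t1 + t2)"
    have "t > 0" "0 \<le> \<mu>" "\<mu> \<le> 1"
      using t1 t2 unfolding t_def \<mu>_def by auto
    have weights: "\<mu> * t1 = t" "(1 - \<mu>) * t2 = t"
      using t1 t2 unfolding t_def \<mu>_def by (simp_all add: field_simps)
    have ratios: "\<mu> / t = 1 / t1" "(1 - \<mu>) / t = 1 / t2"
      using weights t1 t2 \<open>t > 0\<close> by (simp_all add: field_simps)
    have "t *\<^sub>R (x + y) = \<mu> *\<^sub>R (t1 *\<^sub>R x) + (1 - \<mu>) *\<^sub>R (t2 *\<^sub>R y)"
      by (simp add: scaleR_add_right weights)
    then have "k (t *\<^sub>R (x + y)) \<le> \<mu> * k (t1 *\<^sub>R x) + (1 - \<mu>) * k (t2 *\<^sub>R y)"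
      using convex_onD[OF convex, of "1 - \<mu>" "t1 *\<^sub>R x" "t2 *\<^sub>R y"] \<open>0 \<le> \<mu>\<close> \<open>\<mu> \<le> 1\<close>
      by simp
    then have "k (t *\<^sub>R (x + y)) / t \<le> (\<mu> * k (t1 *\<^sub>R x) + (1 - \<mu>) * k (t2 *\<^sub>R y)) / t"
      using \<open>t > 0\<close> by (simp add: divide_right_mono)
    also have "\<dots> = (\<mu> / t) * k (t1 *\<^sub>R x) + ((1 - \<mu>) / t) * k (t2 *\<^sub>R y)"
      by (simp add: add_divide_distrib)
    also have "\<dots> = k (t1 *\<^sub>R x) / t1 + k (t2 *\<^sub>R y) / t2"
      using ratios by simp
    finally show ?thesis
      using dirderiv0_le[OF \<open>t > 0\<close>, of "x + y"] by linarith
  qed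
  have "dirderiv0 k (x + y) - dirderiv0 k y \<le> dirderiv0 k x"
  proof (intro dirderiv0_greatest)
    fix t1 :: real assume "t1 > 0"
    have "dirderiv0 k (x + y) - k (t1 *\<^sub>R x) / t1 \<le> dirderiv0 k y"
      by (rule dirderiv0_greatest) (use \<open>t1 > 0\<close> key in force)
    then show "dirderiv0 k (x + y) - dirderiv0 k y \<le> k (t1 *\<^sub>R x) / t1"
      by linarith
  qed
  then show ?thesis
    by simp
qed

lemma convex_exists_linear_minorant:
  assumes "convex_on UNIV k"
  obtains l where "linear l" "\<And>w. l w \<le> k w"
proof -
  have "0 \<le> dirderiv0 k 0"
    using dirderiv0_lower[of 0] by simp
  then obtain l where l: "linear l" "\<And>w. l w \<le> dirderiv0 k w"
    using hahn_banach[of "dirderiv0 k" "{(0, 0)}", OF dirderiv0_add[OF assms] dirderiv0_scaleR]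
    unfolding linear_graph_def by auto
  moreover have "dirderiv0 k w \<le> k w" for w
    using dirderiv0_le[of 1 w] by simp
  ultimately show ?thesis
    using that order_trans by blast
qed

end

definition lipschitz_regularization :: "('a::real_normed_vector \<Rightarrow> ereal) \<Rightarrow> real \<Rightarrow> 'a \<Rightarrow> real" where
  "lipschitz_regularization F L w = Inf {r + L * norm (a - w) | a r. F a = ereal r}"

context
  fixes F :: "'a::real_normed_vector \<Rightarrow> ereal" and L :: real
  assumes F0: "F 0 = 0" and lower: "\<And>a. ereal (- L * norm a) \<le> F a" and L: "0 \<le> L"
begin

lemma lipschitz_regularization_term_lower:
  assumes "F a = ereal r"
  shows "- L * norm w \<le> r + L * norm (a - w)"
proof -
  have "- L * norm a \<le> r"
    using lower[of a] assms by simp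
  moreover have "L * norm a \<le> L * norm (a - w) + L * norm w"
    using norm_triangle_sub[of a w] L by (simp add: mult_left_mono flip: distrib_left)
  ultimately show ?thesis
    by linarith
qed

lemma lipschitz_regularization_le:
  "F a = ereal r \<Longrightarrow> lipschitz_regularization F L w \<le> r + L * norm (a - w)"
  unfolding lipschitz_regularization_def using lipschitz_regularization_term_lower
  by (intro cInf_lower) (auto intro!: bdd_belowI[where m = "- L * norm w"])

lemma lipschitz_regularization_lower: "- L * norm w \<le> lipschitz_regularization F L w"
  unfolding lipschitz_regularization_def using F0 lipschitz_regularization_term_lower
  by (intro cInf_greatest) (auto simp: zero_ereal_def)

lemma lipschitz_regularization_upper: "lipschitz_regularization F L w \<le> L * norm w"
  using lipschitz_regularization_le[of 0 0 w] F0 by simp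

lemma lipschitz_regularization_le_fun: "ereal (lipschitz_regularization F L a) \<le> F a"
  using lipschitz_regularization_le[of a _ a] lower[of a] by (cases "F a") auto

lemma lipschitz_regularization_approx:
  assumes "e > 0"
  obtains a r where "F a = ereal r" "r + L * norm (a - w) < lipschitz_regularization F L w + e"
proof -
  let ?A = "{r + L * norm (a - w) | a r. F a = ereal r}"
  have "?A \<noteq> {}"
    using F0 by (auto simp: zero_ereal_def)
  moreover have "bdd_below ?A"
    using lipschitz_regularization_term_lower by (auto intro!: bdd_belowI[where m = "- L * norm w"])
  moreover have "Inf ?A < lipschitz_regularization F L w + e"
    using assms unfolding lipschitz_regularization_def by simp
  ultimately obtain v where "v \<in> ?A" "v < lipschitz_regularization F L w + e"
    using cInf_less_iff[of ?A] by auto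
  then show ?thesis
    using that by auto
qed

lemma convex_on_lipschitz_regularization:
  assumes convex: "convex_efun F"
  shows "convex_on UNIV (lipschitz_regularization F L)"
proof (rule convex_onI)
  fix t :: real and x y :: 'a assume t: "0 < t" "t < 1"
  let ?k = "lipschitz_regularization F L"
  show "?k ((1 - t) *\<^sub>R x + t *\<^sub>R y) \<le> (1 - t) * ?k x + t * ?k y"
  proof (rule field_le_epsilon)
    fix e :: real assume "e > 0"
    obtain a r where a: "F a = ereal r" "r + L * norm (a - x) < ?k x + e"
      using lipschitz_regularization_approx[OF \<open>e > 0\<close>] by blast
    obtain b s where b: "F b = ereal s" "s + L * norm (b - y) < ?k y + e"
      using lipschitz_regularization_approx[OF \<open>e > 0\<close>] by blast
    define c where "c = (1 - t) *\<^sub>R a + t *\<^sub>R b"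
    have "F c \<le> ereal ((1 - t) * r + t * s)"
      using convex_efunD[OF convex a(1) b(1), of "1 - t"] t unfolding c_def by simp
    then obtain q where q: "F c = ereal q" "q \<le> (1 - t) * r + t * s"
      using lower[of c] by (cases "F c") auto
    have "c - ((1 - t) *\<^sub>R x + t *\<^sub>R y) = (1 - t) *\<^sub>R (a - x) + t *\<^sub>R (b - y)"
      unfolding c_def by (simp add: algebra_simps)
    then have "norm (c - ((1 - t) *\<^sub>R x + t *\<^sub>R y)) \<le> (1 - t) * norm (a - x) + t * norm (b - y)"
      using norm_triangle_ineq[of "(1 - t) *\<^sub>R (a - x)" "t *\<^sub>R (b - y)"] t by simp
    then have "L * norm (c - ((1 - t) *\<^sub>R x + t *\<^sub>R y))
        \<le> (1 - t) * (L * norm (a - x)) + t * (L * norm (b - y))"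
      using mult_left_mono[OF _ L] by (fastforce simp: algebra_simps)
    then have "?k ((1 - t) *\<^sub>R x + t *\<^sub>R y)
        \<le> (1 - t) * (r + L * norm (a - x)) + t * (s + L * norm (b - y))"
      using lipschitz_regularization_le[OF q(1), of "(1 - t) *\<^sub>R x + t *\<^sub>R y"] q(2)
      by (simp add: algebra_simps)
    also have "\<dots> \<le> (1 - t) * (?k x + e) + t * (?k y + e)"
      using a(2) b(2) t by (intro add_mono[OF mult_left_mono mult_left_mono]) auto
    finally show "?k ((1 - t) *\<^sub>R x + t *\<^sub>R y) \<le> (1 - t) * ?k x + t * ?k y + e"
      by (simp add: algebra_simps)
  qed
qed simp

end

lemma convex_efun_exists_bounded_minorant:
  fixes F :: "'a::real_normed_vector \<Rightarrow> ereal"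
  assumes "convex_efun F" "F 0 = 0" "\<And>a. ereal (- L * norm a) \<le> F a" "0 \<le> L"
  obtains l :: "'a \<Rightarrow>\<^sub>L real" where "\<And>a. ereal (l a) \<le> F a" "norm l \<le> L"
proof -
  let ?k = "lipschitz_regularization F L"
  obtain l where l: "linear l" "\<And>w. l w \<le> ?k w"
    using convex_exists_linear_minorant[OF lipschitz_regularization_lower convex_on_lipschitz_regularization]
      assms by blast
  have bound: "\<bar>l w\<bar> \<le> norm w * L" for w
    using l(2)[of w] l(2)[of "- w"] lipschitz_regularization_upper[OF assms(2-4), of w]
      lipschitz_regularization_upper[OF assms(2-4), of "- w"] linear_neg[OF l(1), of w]
    by (simp add: abs_le_iff mult.commute)
  then have "bounded_linear l"
    using l(1) by (intro bounded_linear_intro[where K = L]) (auto simp: linear_iff)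
  moreover have "ereal (l a) \<le> F a" for a
    using l(2)[of a] lipschitz_regularization_le_fun[OF assms(2-4), of a]
    by (meson ereal_less_eq(3) order_trans)
  ultimately show ?thesis
    using that[of "Blinfun l"] bound assms(4)
    by (simp add: bounded_linear_Blinfun_apply norm_blinfun_bound mult.commute)
qed

section \<open>Subgradients\<close>

lemma convex_efun_translate_diff_affine:
  fixes f :: "'a::real_normed_vector \<Rightarrow> ereal" and l :: "'a \<Rightarrow>\<^sub>L real"
  assumes f: "convex_efun f" "\<And>x. f x \<noteq> -\<infinity>"
  shows "convex_efun (\<lambda>a. f (u + a) - ereal (c + l a))"
proof (rule convex_efunI)
  show "f (u + a) - ereal (c + l a) \<noteq> -\<infinity>" for a
    using f(2)[of "u + a"] by (cases "f (u + a)") auto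
  have f_eq: "f (u + a) = ereal (r + c + l a)" if "f (u + a) - ereal (c + l a) = ereal r" for a r
    using that f(2)[of "u + a"] by (cases "f (u + a)") auto
  fix a b ra rb and t :: real
  assume "f (u + a) - ereal (c + l a) = ereal ra" "f (u + b) - ereal (c + l b) = ereal rb"
    "0 \<le> t" "t \<le> 1"
  then have "f (t *\<^sub>R (u + a) + (1 - t) *\<^sub>R (u + b))
      \<le> ereal (t * (ra + c + l a) + (1 - t) * (rb + c + l b))"
    by (intro convex_efunD[OF f(1)] f_eq)
  moreover have "t *\<^sub>R (u + a) + (1 - t) *\<^sub>R (u + b) = u + (t *\<^sub>R a + (1 - t) *\<^sub>R b)"
    by (simp add: algebra_simps)
  moreover have "l (t *\<^sub>R a + (1 - t) *\<^sub>R b) = t * l a + (1 - t) * l b"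
    by (simp add: blinfun.add_right blinfun.scaleR_right)
  ultimately show "f (u + (t *\<^sub>R a + (1 - t) *\<^sub>R b)) - ereal (c + l (t *\<^sub>R a + (1 - t) *\<^sub>R b))
      \<le> ereal (t * ra + (1 - t) * rb)"
    by (cases "f (u + (t *\<^sub>R a + (1 - t) *\<^sub>R b))") (auto simp: algebra_simps)
qed

lemma subdiff_add_Lipschitz:
  fixes f :: "'a::real_normed_vector \<Rightarrow> ereal"
  assumes f: "convex_efun f" "\<And>x. f x \<noteq> -\<infinity>"
    and p: "\<And>a b. \<bar>p a - p b\<bar> \<le> L * norm (a - b)" and L: "0 \<le> L"
    and x': "x' \<in> subdiff (\<lambda>x. f x + ereal (p x)) u"
  obtains y' where "y' \<in> subdiff f u" "norm (y' - x') \<le> L"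
proof -
  obtain fu where fu: "f u = ereal fu"
    using x' f(2)[of u] unfolding subdiff_def by (cases "f u") auto
  have sub: "ereal (fu + p u + x' (w - u)) \<le> f w + ereal (p w)" for w
    using x' fu unfolding subdiff_def by auto
  \<comment> \<open>F is f recentred at u and tilted by x', so that F 0 = 0 and F is minorised by -L norm.\<close>
  define F where "F a = f (u + a) - ereal (fu + x' a)" for a
  have "convex_efun F"
    unfolding F_def by (rule convex_efun_translate_diff_affine[OF f])
  moreover have "F 0 = 0"
    unfolding F_def using fu by simp
  moreover have "ereal (- L * norm a) \<le> F a" for a
  proof -
    have "p u - p (u + a) \<ge> - L * norm a"
      using p[of u "u + a"] by simp
    then show ?thesis
      using sub[of "u + a"] f(2)[of "u + a"] unfolding F_def by (cases "f (u + a)") auto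
  qed
  ultimately obtain l :: "'a \<Rightarrow>\<^sub>L real" where l: "\<And>a. ereal (l a) \<le> F a" "norm l \<le> L"
    using convex_efun_exists_bounded_minorant L by blast
  have "x' + l \<in> subdiff f u"
    unfolding subdiff_def
  proof (intro CollectI conjI allI)
    show "f u \<noteq> \<infinity>"
      using fu by simp
    fix w
    show "f u + ereal ((x' + l) (w - u)) \<le> f w"
      using l(1)[of "w - u"] fu f(2)[of w] unfolding F_def
      by (cases "f w") (auto simp: blinfun.add_left)
  qed
  then show ?thesis
    using that l(2) by simp
qed

lemma mem_of_norm_less_dset_frontier:
  fixes A :: "'a::real_normed_vector set"
  assumes "0 \<in> A" "ereal (norm z) < dset 0 (frontier A)"
  shows "z \<in> A"
proof (rule ccontr)
  assume "z \<notin> A"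
  have "connected (cball (0::'a) (norm z))"
    by (rule connected_cball)
  moreover have "0 \<in> cball 0 (norm z) \<inter> A"
    using assms(1) by simp
  moreover have "z \<in> cball 0 (norm z) - A"
    using \<open>z \<notin> A\<close> by simp
  ultimately have "cball 0 (norm z) \<inter> frontier A \<noteq> {}"
    by (intro connected_Int_frontier) blast+
  then obtain y where "norm y \<le> norm z" "y \<in> frontier A"
    by auto
  then have "dset 0 (frontier A) \<le> ereal (norm z)"
    unfolding dset_def using infdist_le[of y "frontier A" 0] by auto
  then show False
    using assms(2) by simp
qed

lemma sharp_growth_of_subdiff_ball:
  assumes "f x = 0" "0 \<in> subdiff f x" "0 \<le> s" "ereal s < dset 0 (frontier (subdiff f x))"
  shows "ereal (s * norm (w - x)) \<le> f w"
proof -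
  obtain N :: "'a \<Rightarrow>\<^sub>L real" where N: "N (w - x) = norm (w - x)" "norm N \<le> 1"
    using exists_norming_functional by blast
  have "norm (s *\<^sub>R N) \<le> s"
    using N(2) assms(3) by (simp add: mult_left_le)
  then have "ereal (norm (s *\<^sub>R N)) < dset 0 (frontier (subdiff f x))"
    using assms(4) by (meson ereal_less_eq(3) le_less_trans)
  then have "s *\<^sub>R N \<in> subdiff f x"
    using assms(2) by (rule mem_of_norm_less_dset_frontier[rotated])
  then have "f x + ereal ((s *\<^sub>R N) (w - x)) \<le> f w"
    unfolding subdiff_def by blast
  then show ?thesis
    using assms(1) N(1) by (simp add: blinfun.scaleR_left)
qed

lemma convex_efun_slope_bound_global:
  assumes g: "convex_efun g" "\<And>x. g x \<noteq> -\<infinity>" "g z = ereal gz" and r: "r > 0"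
    and local: "\<And>w. w \<in> ball z r \<Longrightarrow> g z \<le> g w + ereal (\<delta> * norm (w - z))"
  shows "g z \<le> g w + ereal (\<delta> * norm (w - z))"
proof (cases "g w")
  case (real gw)
  show ?thesis
  proof (cases "w = z")
    case False
    define n where "n = norm (w - z)"
    define t where "t = min 1 (r / (2 * n))"
    have "n > 0" "0 < t" "t \<le> 1" "t * n < r"
      using False r unfolding n_def t_def by (auto simp: min_def field_simps)
    define wt where "wt = t *\<^sub>R w + (1 - t) *\<^sub>R z"
    have "norm (wt - z) = t * n"
      unfolding wt_def n_def using \<open>0 < t\<close>
      by (simp add: algebra_simps flip: scaleR_diff_right)
    then have "g z \<le> g wt + ereal (\<delta> * (t * n))"
      using local[of wt] \<open>t * n < r\<close> by (simp add: dist_norm norm_minus_commute)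
    moreover have "g wt \<le> ereal (t * gw + (1 - t) * gz)"
      unfolding wt_def using convex_efunD[OF g(1) real g(3)] \<open>0 < t\<close> \<open>t \<le> 1\<close> by simp
    ultimately have "g z \<le> ereal (t * gw + (1 - t) * gz) + ereal (\<delta> * (t * n))"
      by (meson add_right_mono order_trans)
    then have "t * gz \<le> t * (gw + \<delta> * n)"
      using g(3) by (simp add: algebra_simps)
    then show ?thesis
      using \<open>0 < t\<close> real g(3) unfolding n_def by simp
  qed (use g(3) in simp)
qed (use g(2) in simp_all)

section \<open>Error bounds\<close>

lemma closed_Sset: "lsc_fun g \<Longrightarrow> closed (Sset g)"
  unfolding lsc_fun_def Sset_def by (metis zero_ereal_def)

lemma lsc_fun_max_0:
  fixes g :: "'a::topological_space \<Rightarrow> ereal"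
  assumes "lsc_fun g"
  shows "lsc_fun (\<lambda>x. max (g x) 0)"
  unfolding lsc_fun_def
proof
  fix c :: real
  show "closed {x. max (g x) 0 \<le> ereal c}"
  proof (cases "c < 0")
    case True
    then have "{x. max (g x) 0 \<le> ereal c} = {}"
      by simp
    then show ?thesis
      by (simp only: closed_empty)
  next
    case False
    then have "{x. max (g x) 0 \<le> ereal c} = {x. g x \<le> ereal c}"
      by auto
    moreover have "closed {x. g x \<le> ereal c}"
      using assms unfolding lsc_fun_def by blast
    ultimately show ?thesis
      by (simp only:)
  qed
qed

lemma small_subgradient_of_slope_bound:
  fixes g :: "'a::real_normed_vector \<Rightarrow> ereal"
  assumes g: "convex_efun g" "\<And>x. g x \<noteq> -\<infinity>" "g z \<noteq> \<infinity>" and \<delta>: "0 \<le> \<delta>"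
    and slope: "\<And>w. g z \<le> g w + ereal (\<delta> * norm (w - z))"
  obtains y' where "y' \<in> subdiff g z" "norm y' \<le> \<delta>"
proof -
  have "0 \<in> subdiff (\<lambda>w. g w + ereal (\<delta> * norm (w - z))) z"
    unfolding subdiff_def using g(3) slope by simp
  moreover have "\<bar>\<delta> * norm (a - z) - \<delta> * norm (b - z)\<bar> \<le> \<delta> * norm (a - b)" for a b
    using norm_triangle_ineq3[of "a - z" "b - z"] \<delta> by (simp add: abs_mult mult_left_mono flip: right_diff_distrib)
  ultimately show ?thesis
    using subdiff_add_Lipschitz[OF g(1,2), of "\<lambda>w. \<delta> * norm (w - z)" \<delta> 0 z] \<delta> that by force
qed

lemma ekeland_small_subgradient:
  fixes g :: "'a::banach \<Rightarrow> ereal"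
  assumes g: "convex_efun g" "lsc_fun g" "\<And>x. g x \<noteq> -\<infinity>"
    and v: "g v = ereal gv" "0 \<le> gv" and \<delta>: "\<delta> > 0"
  obtains z where "\<delta> * dist z v \<le> gv" "z \<notin> Sset g \<Longrightarrow> \<exists>y'\<in>subdiff g z. norm y' \<le> \<delta>"
proof -
  define h where "h w = max (g w) 0" for w
  have "h v = ereal gv"
    using v unfolding h_def by (simp add: max_def)
  then obtain z where z1: "h z + ereal (\<delta> * dist z v) \<le> ereal gv"
    and z2: "\<And>w. h z \<le> h w + ereal (\<delta> * dist w z)"
    using ekeland_variational_principle[of h v \<delta>] lsc_fun_max_0[OF g(2)] \<delta> unfolding h_def by auto
  have "\<delta> * dist z v \<le> gv"
    using z1 unfolding h_def by (cases "g z") (auto simp: max_def split: if_splits)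
  moreover have "\<exists>y'\<in>subdiff g z. norm y' \<le> \<delta>" if z_notin: "z \<notin> Sset g"
  proof -
    have "g z > 0"
      using z_notin unfolding Sset_def by auto
    moreover from this have "g z \<noteq> \<infinity>"
      using z1 unfolding h_def by (cases "g z") auto
    then obtain gz where gz: "g z = ereal gz"
      using g(3)[of z] by (cases "g z") auto
    obtain r where "r > 0" and r: "ball z r \<subseteq> - Sset g"
      using closed_Sset[OF g(2)] z_notin by (meson open_Compl open_contains_ball_eq ComplI)
    \<comment> \<open>Off the sublevel set h coincides with g, so z is a local, hence global, minimiser of g + \<delta> norm (_ - z).\<close>
    have "g z \<le> g w + ereal (\<delta> * norm (w - z))" if "w \<in> ball z r" for w
    proof -
      have "g w > 0"
        using r that unfolding Sset_def by auto
      then have "h w = g w" "h z = g z"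
        using \<open>g z > 0\<close> unfolding h_def by (simp_all add: max.absorb1)
      then show ?thesis
        using z2[of w] by (simp add: dist_norm)
    qed
    then have "g z \<le> g w + ereal (\<delta> * norm (w - z))" for w
      using convex_efun_slope_bound_global[OF g(1,3) gz \<open>r > 0\<close>] by blast
    then show ?thesis
      using small_subgradient_of_slope_bound[OF g(1,3) \<open>g z \<noteq> \<infinity>\<close>, of \<delta>] \<delta> by force
  qed
  ultimately show ?thesis
    using that by blast
qed

lemma error_bound_of_subgradient_bound:
  fixes g :: "'a::banach \<Rightarrow> ereal"
  assumes g: "convex_efun g" "lsc_fun g" "\<And>x. g x \<noteq> -\<infinity>" and "c > 0"
    and slope: "\<And>u y'. g u > 0 \<Longrightarrow> y' \<in> subdiff g u \<Longrightarrow> c \<le> norm y'"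
    and "g v > 0"
  shows "ereal (c * infdist v (Sset g)) \<le> g v"
proof (cases "g v")
  case (real gv)
  define d where "d = infdist v (Sset g)"
  show ?thesis
  proof (rule ccontr)
    assume "\<not> ?thesis"
    then have "gv < c * d" "gv > 0"
      using real \<open>g v > 0\<close> unfolding d_def by simp_all
    then have "d > 0"
      using \<open>c > 0\<close> by (smt (verit) mult_nonneg_nonpos infdist_nonneg d_def)
    define \<delta> where "\<delta> = (gv / d + c) / 2"
    have "gv / d < \<delta>" "\<delta> < c" "\<delta> > 0"
      using \<open>gv < c * d\<close> \<open>d > 0\<close> \<open>gv > 0\<close> unfolding \<delta>_def by (simp_all add: field_simps)
    then obtain z where z: "\<delta> * dist z v \<le> gv"
      and small: "z \<notin> Sset g \<Longrightarrow> \<exists>y'\<in>subdiff g z. norm y' \<le> \<delta>"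
      using ekeland_small_subgradient[OF g real] \<open>gv > 0\<close> by auto
    have "\<delta> * dist z v < \<delta> * d"
      using z \<open>gv / d < \<delta>\<close> \<open>d > 0\<close> by (simp add: field_simps)
    then have "dist z v < d"
      using \<open>\<delta> > 0\<close> by simp
    then have "z \<notin> Sset g"
      using infdist_le[of z "Sset g" v] unfolding d_def by (auto simp: dist_commute)
    then obtain y' where "y' \<in> subdiff g z" "norm y' \<le> \<delta>"
      using small by blast
    moreover have "g z > 0"
      using \<open>z \<notin> Sset g\<close> unfolding Sset_def by auto
    ultimately show False
      using slope \<open>\<delta> < c\<close> by force
  qed
qed (use \<open>g v > 0\<close> in simp_all)

lemma Er_ge_of_subgradient_bound:
  fixes g :: "'a::banach \<Rightarrow> ereal"
  assumes g: "convex_efun g" "lsc_fun g" "\<And>x. g x \<noteq> -\<infinity>" "Sset g \<noteq> {}" and "c > 0"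
    and slope: "\<And>u y'. g u > 0 \<Longrightarrow> y' \<in> subdiff g u \<Longrightarrow> c \<le> norm y'"
  shows "ereal c \<le> Er g"
  unfolding Er_def
proof (rule Inf_greatest, clarify)
  fix v assume "g v > 0"
  define d where "d = infdist v (Sset g)"
  have "v \<notin> Sset g"
    using \<open>g v > 0\<close> unfolding Sset_def by auto
  then have "d > 0"
    using in_closed_iff_infdist_zero[OF closed_Sset[OF g(2)] g(4)] infdist_nonneg[of v]
    unfolding d_def by (simp add: order_less_le)
  moreover have "ereal (c * d) \<le> g v"
    unfolding d_def by (rule error_bound_of_subgradient_bound[OF g(1-3) \<open>c > 0\<close> slope \<open>g v > 0\<close>])
  moreover have "dset v (Sset g) = ereal d"
    using g(4) unfolding dset_def d_def by simp
  ultimately show "ereal c \<le> g v / dset v (Sset g)"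
    by (cases "g v") (simp_all add: field_simps)
qed

section \<open>Perturbations\<close>

lemma PtbE:
  fixes f :: "'a::real_normed_vector \<Rightarrow> ereal"
  assumes "g \<in> Ptb f \<epsilon>"
  obtains p x \<xi> where "g = (\<lambda>u. f u + ereal (p u))" "convex_on UNIV p" "Sset g \<noteq> {}"
    "f x = 0" "0 \<le> \<xi>" "ereal \<xi> + bd_modulus f - tau f x \<xi> \<bar>p x\<bar> \<le> ereal \<epsilon>"
    "\<And>a b. \<bar>p a - p b\<bar> \<le> \<xi> * norm (a - b)"
proof -
  obtain p x \<xi> where "g = (\<lambda>u. f u + ereal (p u))" "convex_on UNIV p" "Sset g \<noteq> {}"
    "f x = 0" "0 \<le> \<xi>" "ereal \<xi> + bd_modulus f - tau f x \<xi> \<bar>p x\<bar> \<le> ereal \<epsilon>"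
    "\<And>u. \<bar>p u - p x\<bar> \<le> \<xi> * norm (u - x)"
    using assms unfolding Ptb_def Seq_def by blast
  then show ?thesis
    using that convex_on_Lipschitz_of_point by blast
qed

context
  fixes f :: "'a::real_normed_vector \<Rightarrow> ereal" and p :: "'a \<Rightarrow> real" and \<xi> :: real
  assumes proper: "\<And>x. f x \<noteq> -\<infinity>"
    and Lipschitz: "\<And>a b. \<bar>p a - p b\<bar> \<le> \<xi> * norm (a - b)" and "0 \<le> \<xi>"
begin

lemma subgradient_norm_ge_of_subdiff_ball:
  assumes x: "f x = 0" "0 \<in> subdiff f x"
    and s: "0 \<le> s" "ereal s < dset 0 (frontier (subdiff f x))"
    and S: "Sset (\<lambda>w. f w + ereal (p w)) \<noteq> {}"
    and u: "f u + ereal (p u) > 0" and x': "x' \<in> subdiff (\<lambda>w. f w + ereal (p w)) u"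
  shows "s \<le> norm x' + \<xi>"
proof -
  have sharp: "ereal (s * norm (w - x)) \<le> f w" for w
    by (rule sharp_growth_of_subdiff_ball[OF x s])
  show ?thesis
  proof (cases "u = x")
    case True
    \<comment> \<open>Then p x > 0, and comparing with a point of the sublevel set gives s < \<xi>.\<close>
    obtain w where w: "f w + ereal (p w) \<le> 0"
      using S unfolding Sset_def by auto
    have "p w \<ge> p x - \<xi> * norm (w - x)"
      using Lipschitz[of w x] by linarith
    then have "(s - \<xi>) * norm (w - x) + p x \<le> 0"
      using w sharp[of w] proper[of w] by (cases "f w") (auto simp: algebra_simps)
    moreover have "p x > 0"
      using u True x(1) by simp
    ultimately have "s < \<xi>"
      by (smt (verit) mult_nonneg_nonneg norm_ge_zero)
    then show ?thesis
      using norm_ge_zero[of x'] by linarith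
  next
    case False
    obtain fu where fu: "f u = ereal fu"
      using x' proper[of u] unfolding subdiff_def by (cases "f u") auto
    have "f u + ereal (p u) + ereal (x' (x - u)) \<le> f x + ereal (p x)"
      using x' unfolding subdiff_def by blast
    then have "fu + p u + x' (x - u) \<le> p x"
      using fu x(1) by simp
    moreover have "p u \<ge> p x - \<xi> * norm (u - x)"
      using Lipschitz[of u x] by linarith
    moreover have "- x' (x - u) \<le> norm x' * norm (u - x)"
      using norm_blinfun[of x' "x - u"] by (simp add: norm_minus_commute)
    moreover have "s * norm (u - x) \<le> fu"
      using sharp[of u] fu by simp
    ultimately have "(s - \<xi>) * norm (u - x) \<le> norm x' * norm (u - x)"
      by (simp add: algebra_simps)
    then show ?thesis
      using False by simp
  qed
qed

lemma tau_le_subgradient_norm: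
  assumes convex: "convex_efun f" and "f x = 0"
    and S: "Sset (\<lambda>w. f w + ereal (p w)) \<noteq> {}"
    and u: "f u + ereal (p u) > 0" and x': "x' \<in> subdiff (\<lambda>w. f w + ereal (p w)) u"
  shows "tau f x \<xi> \<bar>p x\<bar> \<le> ereal (norm x' + \<xi>)"
proof (cases "0 \<in> interior (subdiff f x)")
  case True
  then have "0 \<in> subdiff f x"
    using interior_subset by blast
  have "y \<le> ereal (norm x' + \<xi>)" if y: "y < dset 0 (frontier (subdiff f x))" for y
  proof (cases "y \<le> 0")
    case True
    moreover have "0 \<le> ereal (norm x' + \<xi>)"
      using \<open>0 \<le> \<xi>\<close> by simp
    ultimately show ?thesis
      by (rule order_trans)
  next
    case False
    then obtain s where "y = ereal s" "0 \<le> s"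
      using y by (cases y) auto
    then show ?thesis
      using subgradient_norm_ge_of_subdiff_ball[OF \<open>f x = 0\<close> \<open>0 \<in> subdiff f x\<close> _ _ S u x'] y
      by simp
  qed
  then show ?thesis
    using True unfolding tau_def by (simp add: dense_le)
next
  case False
  obtain y' where y': "y' \<in> subdiff f u" "norm (y' - x') \<le> \<xi>"
    using subdiff_add_Lipschitz[OF convex proper Lipschitz \<open>0 \<le> \<xi>\<close> x'] by blast
  \<comment> \<open>u lies in the set over which tau takes its infimum.\<close>
  have "ereal (- \<xi> * norm (u - x) - \<bar>p x\<bar>) \<le> f u"
    using u Lipschitz[of u x] proper[of u] by (cases "f u") auto
  then have "tau f x \<xi> \<bar>p x\<bar> \<le> dset 0 (subdiff f u)"
    unfolding tau_def using False by (auto intro!: Inf_lower)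
  also have "\<dots> \<le> ereal (norm y')"
    using y'(1) infdist_le[OF y'(1), of 0] unfolding dset_def by auto
  also have "norm y' \<le> norm x' + \<xi>"
    using norm_triangle_ineq[of x' "y' - x'"] y'(2) by simp
  finally show ?thesis
    by simp
qed

end

lemma Ptb_subgradient_norm_ge:
  assumes f: "f \<in> Gamma0" and g: "g \<in> Ptb f \<epsilon>" and u: "g u > 0" and x': "x' \<in> subdiff g u"
  shows "bd_modulus f - ereal \<epsilon> \<le> ereal (norm x')"
proof -
  obtain p x \<xi> where g_eq: "g = (\<lambda>u. f u + ereal (p u))" and "convex_on UNIV p"
    and "Sset g \<noteq> {}" "f x = 0" "0 \<le> \<xi>"
    and C: "ereal \<xi> + bd_modulus f - tau f x \<xi> \<bar>p x\<bar> \<le> ereal \<epsilon>"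
    and p: "\<And>a b. \<bar>p a - p b\<bar> \<le> \<xi> * norm (a - b)"
    by (rule PtbE[OF g]) (rule that)
  have "convex_efun f" "\<And>x. f x \<noteq> -\<infinity>"
    using f unfolding Gamma0_def proper_fun_def by auto
  moreover have "Sset (\<lambda>w. f w + ereal (p w)) \<noteq> {}" "f u + ereal (p u) > 0"
    "x' \<in> subdiff (\<lambda>w. f w + ereal (p w)) u"
    using \<open>Sset g \<noteq> {}\<close> u x' unfolding g_eq by simp_all
  ultimately have "tau f x \<xi> \<bar>p x\<bar> \<le> ereal (norm x' + \<xi>)"
    using tau_le_subgradient_norm[of f p \<xi>] p \<open>0 \<le> \<xi>\<close> \<open>f x = 0\<close> by blast
  with C show ?thesis
    by (cases "bd_modulus f"; cases "tau f x \<xi> \<bar>p x\<bar>") auto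
qed

lemma Ptb_Er_ge:
  fixes f :: "'a::banach \<Rightarrow> ereal"
  assumes f: "f \<in> Gamma0" and \<epsilon>: "ereal \<epsilon> < bd_modulus f" and g: "g \<in> Ptb f \<epsilon>"
  shows "bd_modulus f - ereal \<epsilon> \<le> Er g"
proof -
  obtain p x \<xi> where g_eq: "g = (\<lambda>u. f u + ereal (p u))" and "convex_on UNIV p"
    and "Sset g \<noteq> {}" "f x = 0" "0 \<le> \<xi>"
    and C: "ereal \<xi> + bd_modulus f - tau f x \<xi> \<bar>p x\<bar> \<le> ereal \<epsilon>"
    and p: "\<And>a b. \<bar>p a - p b\<bar> \<le> \<xi> * norm (a - b)"
    by (rule PtbE[OF g]) (rule that)
  obtain m where m: "bd_modulus f = ereal m"
    using C \<epsilon> by (cases "bd_modulus f") auto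
  have f_conv: "convex_efun f" "\<And>x. f x \<noteq> -\<infinity>" and "lsc_fun f"
    using f unfolding Gamma0_def proper_fun_def by auto
  have "continuous_on UNIV p"
    using p \<open>0 \<le> \<xi>\<close> by (intro lipschitz_on_continuous_on lipschitz_onI) (auto simp: dist_norm dist_real_def)
  then have "lsc_fun g"
    unfolding g_eq by (rule lsc_fun_add_continuous[OF \<open>lsc_fun f\<close>])
  moreover have "convex_efun g"
    unfolding g_eq by (rule convex_efun_add_convex_on[OF f_conv \<open>convex_on UNIV p\<close>])
  moreover have "g x \<noteq> -\<infinity>" for x
    unfolding g_eq using f_conv(2)[of x] by (cases "f x") simp_all
  moreover have "m - \<epsilon> \<le> norm x'" if "g u > 0" "x' \<in> subdiff g u" for u x'
    using Ptb_subgradient_norm_ge[OF f g that] m by simp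
  ultimately have "ereal (m - \<epsilon>) \<le> Er g"
    using \<epsilon> m \<open>Sset g \<noteq> {}\<close> by (intro Er_ge_of_subgradient_bound) auto
  then show ?thesis
    using m by simp
qed

theorem mainTheorem9:
  fixes f :: "'a::banach \<Rightarrow> ereal" and \<epsilon> :: real
  assumes "f \<in> Gamma0"
    and "Sset f \<noteq> {}"
    and "0 < \<epsilon>" and "ereal \<epsilon> < bd_modulus f"
  shows "(\<forall>g \<in> Ptb f \<epsilon>. \<forall>u. g u > 0 \<longrightarrow>
            (\<forall>x' \<in> subdiff g u. ereal (norm x') \<ge> bd_modulus f - ereal \<epsilon>))
         \<and> Er_Ptb f \<epsilon> \<ge> bd_modulus f - ereal \<epsilon>
         \<and> bd_modulus f - ereal \<epsilon> > 0"
proof (intro conjI)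
  show "\<forall>g \<in> Ptb f \<epsilon>. \<forall>u. g u > 0 \<longrightarrow>
      (\<forall>x' \<in> subdiff g u. ereal (norm x') \<ge> bd_modulus f - ereal \<epsilon>)"
    using Ptb_subgradient_norm_ge[OF assms(1)] by blast
  show "Er_Ptb f \<epsilon> \<ge> bd_modulus f - ereal \<epsilon>"
    unfolding Er_Ptb_def using Ptb_Er_ge[OF assms(1,4)] by (blast intro: INF_greatest)
  show "bd_modulus f - ereal \<epsilon> > 0"
    using assms(4) by (cases "bd_modulus f") auto
qed

end
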